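(* For every integer $d\ge 50$, $\displaystyle\sum_{H\in\mathcal{R}(d-1)}\left(\frac{1}{d-|H|}-\frac1d\right)<\frac{1}{18}$.
   Context: For finite sets $A,B\subseteq\mathbb{N}^+$, $A$ precedes $B$ in the colexicographic order if $\max(A\triangle B)\in B$. For $m\in\mathbb{N}$, $\mathcal{R}(m)$ denotes the family of the first $m$ finite subsets of $\mathbb{N}^+$ in the colexicographic order (starting with $\emptyset$). *)

theory Defs
  imports Complex_Main
begin

definition fin_pos_sets :: "nat set set" where
  "fin_pos_sets = {A. finite A \<and> 0 \<notin> A}"

definition colex_less :: "nat set \<Rightarrow> nat set \<Rightarrow> bool" where
  "colex_less A B \<longleftrightarrow> A \<noteq> B \<and> Max ((A - B) \<union> (B - A)) \<in> B"

text \<open>R m: the first m finite subsets of the positive integers in colex order,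
  i.e. those having fewer than m predecessors.\<close>
definition R :: "nat \<Rightarrow> nat set set" where
  "R m = {H \<in> fin_pos_sets. card {A \<in> fin_pos_sets. colex_less A H} < m}"

end

(*
  Colex order on finite sets of naturals is the order of their binary encodings
  set_encode A = (\<Sum>a\<in>A. 2^a).  Shifting by one, the n-th finite set of positive
  integers in colex order is {i + 1 | bit i of n is set}, so R(m) consists of the
  binary sets of 0, ..., m - 1 and the sum in question is
  \<Sum>n<d-1. popcount n / (d (d - popcount n)).

  If d - 1 \<le> 2^k then every popcount is at most k and the popcounts sum to at most
  k (d - 1) / 2, which gives the bound k (d - 1) / (2 d (d - k)) < 1/18 as soon as
  10 k \<le> d, which holds for the least such k once d \<ge> 70.  For 50 \<le> d < 70 the margin is too small
  (about 10^-4 at d = 50) and the sum is evaluated exactly.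
*)
theory Submission
  imports Defs "HOL-Library.Nat_Bijection"
begin

lemma set_encode_le_if_mem: "finite A \<Longrightarrow> x \<in> A \<Longrightarrow> 2 ^ x \<le> set_encode A"
  unfolding set_encode_def by (rule member_le_sum) auto

lemma set_encode_less_power2:
  assumes "finite A" "A \<subseteq> {..<M}"
  shows "set_encode A < 2 ^ M"
proof -
  have "set_encode A \<le> (\<Sum>i=0..<M. 2 ^ i)"
    unfolding set_encode_def using assms by (intro sum_mono2) auto
  also have "\<dots> < 2 ^ M"
    by (simp add: sum_power2)
  finally show ?thesis .
qed

lemma set_encode_Int_Diff: "finite A \<Longrightarrow> set_encode A = set_encode (A \<inter> B) + set_encode (A - B)"
  unfolding set_encode_def by (rule sum.Int_Diff)

lemma set_encode_Suc_image: "finite A \<Longrightarrow> set_encode (Suc ` A) = 2 * set_encode A"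
  by (simp add: set_encode_def sum.reindex sum_distrib_left)

lemma set_encode_less_if_colex_less:
  assumes "finite A" "finite B" "colex_less A B"
  shows "set_encode A < set_encode B"
proof -
  define M where "M = Max ((A - B) \<union> (B - A))"
  have "M \<in> B - A"
    using assms Max_in[of "(A - B) \<union> (B - A)"] by (auto simp: colex_less_def M_def)
  have "A - B \<subseteq> {..<M}"
  proof
    fix x assume "x \<in> A - B"
    then have "x \<le> M" using assms by (auto simp: M_def)
    with \<open>x \<in> A - B\<close> \<open>M \<in> B - A\<close> show "x \<in> {..<M}" by (auto simp: le_less)
  qed
  then have "set_encode (A - B) < 2 ^ M"
    using assms by (intro set_encode_less_power2) auto
  also have "\<dots> \<le> set_encode (B - A)"
    using assms \<open>M \<in> B - A\<close> by (intro set_encode_le_if_mem) auto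
  finally show ?thesis
    using assms set_encode_Int_Diff[of A B] set_encode_Int_Diff[of B A] by (simp add: Int_commute)
qed

lemma colex_less_iff_set_encode_less:
  assumes "finite A" "finite B"
  shows "colex_less A B \<longleftrightarrow> set_encode A < set_encode B"
proof
  assume less: "set_encode A < set_encode B"
  then have "A \<noteq> B" by auto
  then have "Max ((A - B) \<union> (B - A)) \<in> (A - B) \<union> (B - A)"
    using assms by (intro Max_in) auto
  moreover have "\<not> colex_less B A"
    using set_encode_less_if_colex_less[OF assms(2,1)] less by auto
  ultimately show "colex_less A B"
    using \<open>A \<noteq> B\<close> by (auto simp: colex_less_def Un_commute)
qed (use assms set_encode_less_if_colex_less in blast)

text \<open>Defined by recursion rather than as card (set_decode n) so that it can be
  evaluated by code_simp.\<close>
fun popcount :: "nat \<Rightarrow> nat" where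
  "popcount n = (if n = 0 then 0 else n mod 2 + popcount (n div 2))"

declare popcount.simps [simp del]

lemma popcount_0 [simp]: "popcount 0 = 0"
  by (simp add: popcount.simps)

lemma card_set_decode: "card (set_decode n) = popcount n"
proof (induction n rule: less_induct)
  case (less n)
  show ?case
  proof (cases "n = 0")
    case False
    have split: "set_decode n = (if odd n then {0} else {}) \<union> Suc ` set_decode (n div 2)"
    proof (rule set_eqI)
      show "x \<in> set_decode n \<longleftrightarrow> x \<in> (if odd n then {0} else {}) \<union> Suc ` set_decode (n div 2)" for x
        by (cases x) auto
    qed
    have "card (set_decode n) = n mod 2 + card (set_decode (n div 2))"
      by (subst split, subst card_Un_disjoint) (auto simp: card_image odd_iff_mod_2_eq_one)
    with less False show ?thesis
      by (simp add: popcount.simps[of n])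
  qed simp
qed

definition pos_decode :: "nat \<Rightarrow> nat set" where
  "pos_decode n = Suc ` set_decode n"

lemma card_pos_decode: "card (pos_decode n) = popcount n"
  by (simp add: pos_decode_def card_image card_set_decode)

lemma inj_pos_decode: "inj pos_decode"
  by (rule injI) (metis pos_decode_def inj_image_eq_iff inj_Suc set_decode_inverse)

lemma fin_pos_sets_eq_range_pos_decode: "fin_pos_sets = range pos_decode"
proof (intro set_eqI iffI)
  fix H assume "H \<in> fin_pos_sets"
  then have "finite (Suc -` H)" "0 \<notin> H"
    by (auto simp: fin_pos_sets_def finite_vimageI)
  moreover have "H = Suc ` (Suc -` H)" if "0 \<notin> H"
  proof (rule set_eqI)
    show "x \<in> H \<longleftrightarrow> x \<in> Suc ` (Suc -` H)" for x
      using that by (cases x) auto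
  qed
  ultimately show "H \<in> range pos_decode"
    by (metis pos_decode_def set_encode_inverse rangeI)
qed (auto simp: fin_pos_sets_def pos_decode_def)

lemma colex_less_pos_decode_iff: "colex_less (pos_decode m) (pos_decode n) \<longleftrightarrow> m < n"
  by (simp add: pos_decode_def colex_less_iff_set_encode_less set_encode_Suc_image)

lemma colex_predecessors_pos_decode:
  "{A \<in> fin_pos_sets. colex_less A (pos_decode n)} = pos_decode ` {..<n}"
  by (auto simp: fin_pos_sets_eq_range_pos_decode colex_less_pos_decode_iff)

lemma card_colex_predecessors_pos_decode:
  "card {A \<in> fin_pos_sets. colex_less A (pos_decode n)} = n"
  by (simp add: colex_predecessors_pos_decode card_image inj_on_subset[OF inj_pos_decode])

lemma R_eq_pos_decode: "R m = pos_decode ` {..<m}"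
proof (intro set_eqI iffI)
  fix H assume "H \<in> R m"
  then have "H \<in> range pos_decode" "card {A \<in> fin_pos_sets. colex_less A H} < m"
    by (simp_all add: R_def fin_pos_sets_eq_range_pos_decode[symmetric])
  then show "H \<in> pos_decode ` {..<m}"
    by (auto simp: card_colex_predecessors_pos_decode)
next
  fix H assume "H \<in> pos_decode ` {..<m}"
  moreover have "pos_decode n \<in> fin_pos_sets" for n
    by (simp add: fin_pos_sets_eq_range_pos_decode)
  ultimately show "H \<in> R m"
    by (auto simp: R_def card_colex_predecessors_pos_decode)
qed

lemma sum_R_card: "(\<Sum>H\<in>R m. f (card H)) = (\<Sum>n<m. f (popcount n))"
  by (simp add: R_eq_pos_decode sum.reindex inj_on_subset[OF inj_pos_decode] card_pos_decode)

lemma popcount_power2_add: "r < 2 ^ k \<Longrightarrow> popcount (2 ^ k + r) = Suc (popcount r)"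
proof -
  assume "r < 2 ^ k"
  then have "k \<notin> set_decode r"
    by (simp add: set_decode_def)
  then show ?thesis
    by (simp add: card_set_decode[symmetric] set_decode_plus_power_2)
qed

lemma popcount_le: "n < 2 ^ k \<Longrightarrow> popcount n \<le> k"
proof -
  assume "n < 2 ^ k"
  have "set_decode n \<subseteq> {..<k}"
  proof
    fix x assume "x \<in> set_decode n"
    then have "2 ^ x \<le> n"
      using set_encode_le_if_mem[of "set_decode n" x] by simp
    with \<open>n < 2 ^ k\<close> show "x \<in> {..<k}"
      using nat_power_less_imp_less[of 2 x k] by (simp add: le_less_trans)
  qed
  then show ?thesis
    using card_mono[of "{..<k}"] by (fastforce simp: card_set_decode[symmetric])
qed

lemma sum_popcount_power2_add:
  "r \<le> 2 ^ k \<Longrightarrow> (\<Sum>n<2 ^ k + r. popcount n) = (\<Sum>n<2 ^ k. popcount n) + r + (\<Sum>n<r. popcount n)"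
  by (induction r) (simp_all add: popcount_power2_add)

lemma sum_popcount_le: "m \<le> 2 ^ k \<Longrightarrow> 2 * (\<Sum>n<m. popcount n) \<le> k * m"
proof (induction k arbitrary: m)
  case 0
  then show ?case by (cases m) auto
next
  case (Suc k)
  show ?case
  proof (cases "m \<le> 2 ^ k")
    case True
    then show ?thesis
      using Suc.IH[OF True] by (simp add: trans_le_add2)
  next
    case False
    define r where "r = m - 2 ^ k"
    have m: "m = 2 ^ k + r" and r: "r \<le> 2 ^ k"
      using False Suc.prems by (auto simp: r_def)
    have "2 * (\<Sum>n<m. popcount n) = 2 * (\<Sum>n<2 ^ k. popcount n) + 2 * r + 2 * (\<Sum>n<r. popcount n)"
      using sum_popcount_power2_add[OF r] m by simp
    also have "\<dots> \<le> k * 2 ^ k + 2 * r + k * r"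
      using Suc.IH[of "2 ^ k"] Suc.IH[OF r] by simp
    also have "\<dots> \<le> Suc k * m"
      using r m by (simp add: algebra_simps)
    finally show ?thesis .
  qed
qed

lemma sum_popcount_excess_le:
  fixes d k m :: nat
  assumes "m \<le> 2 ^ k" "k < d"
  shows "(\<Sum>n<m. 1 / (real d - real (popcount n)) - 1 / real d)
    \<le> real k * real m / (2 * real d * (real d - real k))"
proof -
  have dk: "0 < real d - real k" "0 < real d"
    using assms(2) by simp_all
  have "(\<Sum>n<m. 1 / (real d - real (popcount n)) - 1 / real d)
      \<le> (\<Sum>n<m. real (popcount n) / (real d * (real d - real k)))"
  proof (rule sum_mono)
    fix n assume "n \<in> {..<m}"
    then have le: "real (popcount n) \<le> real k"
      using assms(1) by (simp add: popcount_le)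
    then have pos: "0 < real d - real (popcount n)"
      using dk by linarith
    have "1 / (real d - real (popcount n)) - 1 / real d
        = real (popcount n) / (real d * (real d - real (popcount n)))"
      using pos dk by (simp add: field_simps)
    also have "\<dots> \<le> real (popcount n) / (real d * (real d - real k))"
      using le dk pos by (intro divide_left_mono mult_left_mono mult_pos_pos) auto
    finally show "1 / (real d - real (popcount n)) - 1 / real d
        \<le> real (popcount n) / (real d * (real d - real k))" .
  qed
  also have "\<dots> = real (\<Sum>n<m. popcount n) / (real d * (real d - real k))"
    by (simp add: sum_divide_distrib)
  also have "\<dots> \<le> (real k * real m / 2) / (real d * (real d - real k))"
  proof (rule divide_right_mono)
    have "2 * real (\<Sum>n<m. popcount n) \<le> real k * real m"
      using sum_popcount_le[OF assms(1)] by (metis of_nat_le_iff of_nat_mult of_nat_numeral)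
    then show "real (\<Sum>n<m. popcount n) \<le> real k * real m / 2"
      by simp
  qed (use dk in simp)
  finally show ?thesis
    by simp
qed

lemma linear_le_power2: "7 \<le> j \<Longrightarrow> 10 * (j + 1) \<le> (2::nat) ^ j"
  by (induction j rule: dec_induct) auto

lemma popcount_excess_large:
  fixes d :: nat
  assumes "70 \<le> d"
  shows "(\<Sum>n<d - 1. 1 / (real d - real (popcount n)) - 1 / real d) < 1 / 18"
proof -
  have "2 \<le> d - 1"
    using assms by simp
  then obtain j where j: "2 ^ j < d - 1" "d - 1 \<le> 2 ^ (j + 1)"
    using ex_power_ivl2[of 2 "d - 1"] by auto
  have "6 \<le> j"
  proof (rule ccontr)
    assume "\<not> 6 \<le> j"
    then have "(2::nat) ^ (j + 1) \<le> 2 ^ 6"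
      by (intro power_increasing) auto
    with j assms show False by simp
  qed
  then have dk: "10 * (j + 1) \<le> d"
    using linear_le_power2[of j] j(1) assms by (cases "j = 6") auto
  have "(\<Sum>n<d - 1. 1 / (real d - real (popcount n)) - 1 / real d)
      \<le> real (j + 1) * real (d - 1) / (2 * real d * (real d - real (j + 1)))"
    using j(2) dk by (intro sum_popcount_excess_le) auto
  also have "\<dots> < 1 / 18"
  proof -
    have "real (10 * (j + 1)) \<le> real d"
      using dk by (simp only: of_nat_le_iff)
    then have k: "9 * real (j + 1) \<le> real d - real (j + 1)"
      by simp
    then have "real d * (9 * real (j + 1)) \<le> real d * (real d - real (j + 1))"
      by (intro mult_left_mono) auto
    then have "18 * (real (j + 1) * real (d - 1)) < 2 * real d * (real d - real (j + 1))"
      using assms by (simp add: of_nat_diff algebra_simps)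
    moreover have "0 < 2 * real d * (real d - real (j + 1))"
      using k assms by simp
    ultimately show ?thesis
      by (simp add: divide_less_eq)
  qed
  finally show ?thesis .
qed

lemma popcount_table: "map popcount [0..<68]
  = [0, 1, 1, 2, 1, 2, 2, 3, 1, 2, 2, 3, 2, 3, 3, 4,
     1, 2, 2, 3, 2, 3, 3, 4, 2, 3, 3, 4, 3, 4, 4, 5,
     1, 2, 2, 3, 2, 3, 3, 4, 2, 3, 3, 4, 3, 4, 4, 5,
     2, 3, 3, 4, 3, 4, 4, 5, 3, 4, 4, 5, 4, 5, 5, 6,
     1, 2, 2, 3]"
  by code_simp

lemma popcount_excess_small:
  fixes d :: nat
  assumes "50 \<le> d" "d < 70"
  shows "(\<Sum>n<d - 1. 1 / (real d - real (popcount n)) - 1 / real d) < 1 / 18"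
proof -
  let ?g = "\<lambda>e j. 1 / (real e - real j) - 1 / real e"
  have "\<forall>e\<in>set [50..<70]. sum_list (map (?g e) (take (e - 1) (map popcount [0..<68]))) < 1 / 18"
    unfolding popcount_table by simp
  moreover have "d \<in> set [50..<70]"
    unfolding set_upt using assms by simp
  ultimately have "sum_list (map (?g d) (take (d - 1) (map popcount [0..<68]))) < 1 / 18"
    by blast
  moreover have "take (d - 1) (map popcount [0..<68]) = map popcount [0..<d - 1]"
    using assms by (simp add: take_map take_upt)
  ultimately show ?thesis
    by (simp add: interv_sum_list_conv_sum_set_nat atLeast_upt lessThan_atLeast0)
qed

theorem mainTheorem20:
  fixes d :: nat
  assumes "d \<ge> 50"
  shows "(\<Sum>H\<in>R (d - 1). 1 / (real d - real (card H)) - 1 / real d) < 1 / 18"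
proof -
  have "(\<Sum>H\<in>R (d - 1). 1 / (real d - real (card H)) - 1 / real d)
      = (\<Sum>n<d - 1. 1 / (real d - real (popcount n)) - 1 / real d)"
    by (rule sum_R_card)
  also have "\<dots> < 1 / 18"
    using assms popcount_excess_small popcount_excess_large by (cases "d < 70") auto
  finally show ?thesis .
qed

end
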